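(* Let $s\in\mathbb{R}$, $s_0>1/2$ and $0<\lambda\le1$. Then for all $u_0\in H^{s_0}(\mathbb{R})$, $v_0\in H^{s-3}(\mathbb{R})$, $$\|B(u_0,v_0)\|_{H^s}\lesssim\|u_0\|_{H^{s_0}}\|v_0\|_{H^{s-3}},$$ with implicit constant independent of $\lambda$.
   Context: Fourier transform $\hat f(\xi)=(2\pi)^{-1/2}\int f(x)e^{-ix\xi}dx$. $\varphi$ even smooth, $=1$ on $[-1,1]$, $=0$ outside $[-5/4,5/4]$; $\varphi_N=\varphi(\cdot/N)$, $\psi_N=\varphi_N-\varphi_{N/2}$. Fix a sufficiently large dyadic constant $C_0$. With $\xi_2=\xi-\xi_1$, $$M_\lambda(\xi,\xi_1)=\frac{1}{(2\pi)^{1/2}}\sum_{N\ \text{dyadic},\ N\ge C_0}\frac{\varphi_{N/8}(\xi_1)\psi_N(\xi)}{\lambda\xi^2-\lambda\xi_1^2-\xi_2^3},$$ $T_{M_\lambda}(f,g)=\mathscr{F}^{-1}_\xi\big(\int M_\lambda(\xi,\xi_1)\hat f(\xi_1)\hat g(\xi-\xi_1)\,d\xi_1\big)$, and $B(u_0,v_0)=-iT_{M_\lambda}(u_0,v_0)$. *)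

theory Defs
  imports "HOL-Analysis.Analysis"
begin

definition smooth_fun :: "(real \<Rightarrow> real) \<Rightarrow> bool" where
  "smooth_fun f \<longleftrightarrow> (\<forall>n. \<forall>x. ((deriv ^^ n) f) differentiable (at x))"

definition phiN :: "(real \<Rightarrow> real) \<Rightarrow> real \<Rightarrow> real \<Rightarrow> real" where
  "phiN \<phi> N x = \<phi> (x / N)"

definition psiN :: "(real \<Rightarrow> real) \<Rightarrow> real \<Rightarrow> real \<Rightarrow> real" where
  "psiN \<phi> N x = phiN \<phi> N x - phiN \<phi> (N / 2) x"

text \<open>The multiplier M_lambda(xi, xi1); the dyadic N >= C0 (C0 dyadic) are N = C0 * 2^k, k in nat.\<close>
definition M_lambda :: "(real \<Rightarrow> real) \<Rightarrow> real \<Rightarrow> real \<Rightarrow> real \<Rightarrow> real \<Rightarrow> real" where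
  "M_lambda \<phi> C0 lam \<xi> \<xi>1 =
     (1 / sqrt (2 * pi)) *
     (\<Sum>k::nat. (let N = C0 * 2 ^ k in
        phiN \<phi> (N / 8) \<xi>1 * psiN \<phi> N \<xi> /
        (lam * \<xi>^2 - lam * \<xi>1^2 - (\<xi> - \<xi>1)^3)))"

text \<open>Fourier transform of B(u0,v0) = -i T_M(u0,v0), written in terms of
  a = Fourier transform of u0 and b = Fourier transform of v0.\<close>
definition B_hat :: "(real \<Rightarrow> real) \<Rightarrow> real \<Rightarrow> real \<Rightarrow> (real \<Rightarrow> complex) \<Rightarrow> (real \<Rightarrow> complex)
                      \<Rightarrow> real \<Rightarrow> complex" where
  "B_hat \<phi> C0 lam a b \<xi> =
     - \<i> * (\<integral>\<xi>1. complex_of_real (M_lambda \<phi> C0 lam \<xi> \<xi>1) * a \<xi>1 * b (\<xi> - \<xi>1) \<partial>lborel)"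

text \<open>Squared H^s norm of a function given by its Fourier transform F:
  integral of (1+xi^2)^s |F xi|^2.\<close>
definition Hs_norm_sq :: "real \<Rightarrow> (real \<Rightarrow> complex) \<Rightarrow> ennreal" where
  "Hs_norm_sq s F = (\<integral>\<^sup>+ \<xi>. ennreal ((1 + \<xi>^2) powr s * (cmod (F \<xi>))^2) \<partial>lborel)"

end

theory Submission
  imports Defs
begin

text \<open>
  On the support of the dyadic pieces of M_lambda the output frequency xi is large and the
  frequency xi1 of u0 is at most 5|xi|/16. There the resonance function
  lam xi^2 - lam xi1^2 - (xi - xi1)^3 is dominated by its cubic term uniformly in 0 < lam <= 1,
  so each piece is O(|xi|^-3), and only the boundedly many scales N ~ |xi| contribute.
  As |xi - xi1| ~ |xi|, the weight (1 + xi^2)^s |xi|^-6 is comparable to the H^(s-3) weight of v0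
  at xi - xi1. Cauchy-Schwarz in xi1 against the H^s0 weight of u0 then leaves the factor
  (1 + xi1^2)^-s0, integrable because s0 > 1/2, and Tonelli finishes the estimate.
\<close>

section \<open>Integrability of the Japanese bracket\<close>

lemma Japanese_powr_le_abs_powr:
  fixes y e :: real
  assumes "e \<le> 0" "y \<noteq> 0"
  shows "(1 + y^2) powr e \<le> \<bar>y\<bar> powr (2 * e)"
proof -
  have "(1 + y^2) powr e \<le> (y^2) powr e"
    using assms by (intro powr_mono2') auto
  also have "(y^2) powr e = (\<bar>y\<bar> powr 2) powr e"
    using assms by (simp add: powr_realpow)
  also have "\<dots> = \<bar>y\<bar> powr (2 * e)"
    by (rule powr_powr)
  finally show ?thesis .
qed

lemma nn_integral_powr_atLeast_1_finite:
  fixes e :: real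
  assumes "e < -1"
  shows "(\<integral>\<^sup>+y. ennreal (indicator {1..} y * y powr e) \<partial>lborel) < \<infinity>"
proof -
  have "((\<lambda>y. if y \<in> {1..} then y powr e else 0) has_integral -(1 powr (e+1)) / (e+1)) UNIV"
    using has_integral_powr_to_inf[OF assms, of 1] by (simp only: has_integral_restrict_UNIV)
  then have "((\<lambda>y. indicator {1..} y * y powr e) has_integral -(1 powr (e+1)) / (e+1)) UNIV"
    by (rule has_integral_eq[rotated]) (simp add: indicator_def)
  then show ?thesis
    by (subst nn_integral_has_integral_lborel) (auto simp: indicator_def)
qed

lemma nn_integral_Japanese_powr_finite:
  fixes s0 :: real
  assumes "s0 > 1/2"
  shows "(\<integral>\<^sup>+y. ennreal ((1 + y^2) powr (-s0)) \<partial>lborel) < \<infinity>"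
proof -
  define h where "h y = indicator {1..} y * y powr (-2 * s0)" for y :: real
  have [measurable]: "h \<in> borel_measurable borel"
    unfolding h_def by measurable
  have h_fin: "(\<integral>\<^sup>+y. ennreal (h y) \<partial>lborel) < \<infinity>"
    unfolding h_def using assms by (intro nn_integral_powr_atLeast_1_finite) simp
  have h_reflect_fin: "(\<integral>\<^sup>+y. ennreal (h (-y)) \<partial>lborel) < \<infinity>"
    using h_fin nn_integral_real_affine[of "\<lambda>y. ennreal (h y)" "-1" 0] by simp
  have pointwise: "(1 + y^2) powr (-s0) \<le> indicator {-1..1} y + h y + h (-y)" for y
  proof -
    have h_nonneg: "0 \<le> h x" for x
      by (simp add: h_def indicator_def)
    consider "y \<in> {-1..1}" | "1 \<le> y" | "1 \<le> -y"
      by fastforce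
    then show ?thesis
    proof cases
      case 1
      have "(1 + y^2) powr (-s0) \<le> 1 powr (-s0)"
        using assms by (intro powr_mono2') auto
      then show ?thesis
        using 1 h_nonneg[of y] h_nonneg[of "-y"] by simp
    next
      case 2
      then have "(1 + y^2) powr (-s0) \<le> h y"
        using Japanese_powr_le_abs_powr[of "-s0" y] assms by (simp add: h_def)
      then show ?thesis
        using h_nonneg[of "-y"] by (simp add: indicator_def)
    next
      case 3
      then have "(1 + y^2) powr (-s0) \<le> h (-y)"
        using Japanese_powr_le_abs_powr[of "-s0" y] assms by (simp add: h_def abs_if)
      then show ?thesis
        using h_nonneg[of y] by (simp add: indicator_def)
    qed
  qed
  have "(\<integral>\<^sup>+y. ennreal ((1 + y^2) powr (-s0)) \<partial>lborel)
      \<le> (\<integral>\<^sup>+y. ennreal (indicator {-1..1} y) + ennreal (h y) + ennreal (h (-y)) \<partial>lborel)"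
  proof (intro nn_integral_mono)
    fix y :: real
    have "ennreal ((1 + y^2) powr (-s0)) \<le> ennreal (indicator {-1..1} y + h y + h (-y))"
      using pointwise by (rule ennreal_leI)
    then show "ennreal ((1 + y^2) powr (-s0)) \<le> ennreal (indicator {-1..1} y) + ennreal (h y) + ennreal (h (-y))"
      by (simp add: h_def ennreal_plus)
  qed
  also have "\<dots> = emeasure lborel {-1..1::real} + (\<integral>\<^sup>+y. ennreal (h y) \<partial>lborel)
      + (\<integral>\<^sup>+y. ennreal (h (-y)) \<partial>lborel)"
    by (simp add: nn_integral_add ennreal_indicator)
  also have "\<dots> < \<infinity>"
    using h_fin h_reflect_fin by (simp add: ennreal_add_less_top)
  finally show ?thesis .
qed

section \<open>A bilinear estimate in weighted L2\<close>

lemma nn_integral_weighted_Cauchy_Schwarz: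
  fixes f g w :: "'a \<Rightarrow> real"
  assumes [measurable]: "f \<in> borel_measurable M" "g \<in> borel_measurable M" "w \<in> borel_measurable M"
    and w_pos: "\<And>x. w x > 0"
  shows "(\<integral>\<^sup>+x. ennreal (\<bar>f x\<bar> * \<bar>g x\<bar>) \<partial>M)^2
    \<le> (\<integral>\<^sup>+x. ennreal (w x * (f x)^2) \<partial>M) * (\<integral>\<^sup>+x. ennreal ((g x)^2 / w x) \<partial>M)"
proof -
  define F where "F x = ennreal (sqrt (w x) * \<bar>f x\<bar>)" for x
  define G where "G x = ennreal (\<bar>g x\<bar> / sqrt (w x))" for x
  have FG: "F x * G x = ennreal (\<bar>f x\<bar> * \<bar>g x\<bar>)" for x
    using w_pos[of x] by (simp add: F_def G_def flip: ennreal_mult)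
  have F2: "F x ^ 2 = ennreal (w x * (f x)^2)" for x
    using w_pos[of x] by (simp add: F_def ennreal_power power_mult_distrib)
  have G2: "G x ^ 2 = ennreal ((g x)^2 / w x)" for x
    using w_pos[of x] by (simp add: G_def ennreal_power power_divide)
  have "(\<integral>\<^sup>+x. F x * G x \<partial>M)^2 \<le> (\<integral>\<^sup>+x. F x ^ 2 \<partial>M) * (\<integral>\<^sup>+x. G x ^ 2 \<partial>M)"
    by (rule Cauchy_Schwarz_nn_integral) (simp_all add: F_def G_def)
  then show ?thesis
    unfolding FG F2 G2 .
qed

lemma norm_integral_le_nn_integral_norm:
  "ennreal (norm (integral\<^sup>L M f)) \<le> (\<integral>\<^sup>+x. ennreal (norm (f x)) \<partial>M)"
  by (cases "integrable M f") (simp_all add: integral_norm_bound_ennreal not_integrable_integral_eq)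

lemma Hs_bilinear_pointwise_bound:
  fixes m :: "real \<Rightarrow> real \<Rightarrow> real" and a b :: "real \<Rightarrow> complex"
  assumes [measurable]: "m \<xi> \<in> borel_measurable borel"
    "a \<in> borel_measurable borel" "b \<in> borel_measurable borel"
    and Schur: "\<And>y. (1 + \<xi>^2) powr s * (m \<xi> y)^2 \<le> K * (1 + (\<xi> - y)^2) powr t"
  shows "ennreal ((1 + \<xi>^2) powr s)
      * (\<integral>\<^sup>+y. ennreal (norm (complex_of_real (m \<xi> y) * a y * b (\<xi> - y))) \<partial>lborel)^2
    \<le> Hs_norm_sq s0 a *
       (\<integral>\<^sup>+y. ennreal (K * ((1 + (\<xi> - y)^2) powr t * (cmod (b (\<xi> - y)))^2) * (1 + y^2) powr (-s0)) \<partial>lborel)"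
proof -
  define W where "W = (1 + \<xi>^2) powr s"
  define V where "V y = (m \<xi> y * cmod (b (\<xi> - y)))^2 / (1 + y^2) powr s0" for y
  have W_nonneg: "0 \<le> W" unfolding W_def by simp
  have bracket_nonzero: "1 + y^2 \<noteq> (0::real)" for y
    by (smt (verit) zero_le_power2)
  have "(\<integral>\<^sup>+y. ennreal (norm (complex_of_real (m \<xi> y) * a y * b (\<xi> - y))) \<partial>lborel)^2
      \<le> Hs_norm_sq s0 a * (\<integral>\<^sup>+y. ennreal (V y) \<partial>lborel)"
    using nn_integral_weighted_Cauchy_Schwarz[of "\<lambda>y. cmod (a y)" lborel "\<lambda>y. m \<xi> y * cmod (b (\<xi> - y))"
        "\<lambda>y. (1 + y^2) powr s0"]
    by (simp add: V_def Hs_norm_sq_def norm_mult abs_mult mult_ac bracket_nonzero)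
  then have "ennreal W * (\<integral>\<^sup>+y. ennreal (norm (complex_of_real (m \<xi> y) * a y * b (\<xi> - y))) \<partial>lborel)^2
      \<le> ennreal W * (Hs_norm_sq s0 a * (\<integral>\<^sup>+y. ennreal (V y) \<partial>lborel))"
    by (rule mult_left_mono) simp
  also have "\<dots> = Hs_norm_sq s0 a * (\<integral>\<^sup>+y. ennreal W * ennreal (V y) \<partial>lborel)"
  proof -
    have "(\<integral>\<^sup>+y. ennreal W * ennreal (V y) \<partial>lborel) = ennreal W * (\<integral>\<^sup>+y. ennreal (V y) \<partial>lborel)"
      by (rule nn_integral_cmult) (simp add: V_def)
    then show ?thesis
      by (simp add: mult_ac)
  qed
  also have "\<dots> \<le> Hs_norm_sq s0 a *
      (\<integral>\<^sup>+y. ennreal (K * ((1 + (\<xi> - y)^2) powr t * (cmod (b (\<xi> - y)))^2) * (1 + y^2) powr (-s0)) \<partial>lborel)"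
  proof (intro mult_left_mono nn_integral_mono)
    fix y
    have "W * V y = W * (m \<xi> y)^2 * ((cmod (b (\<xi> - y)))^2 * (1 + y^2) powr (-s0))"
      by (simp add: V_def powr_minus divide_inverse power_mult_distrib)
    also have "\<dots> \<le> K * (1 + (\<xi> - y)^2) powr t * ((cmod (b (\<xi> - y)))^2 * (1 + y^2) powr (-s0))"
      unfolding W_def by (intro mult_right_mono Schur) simp
    finally have "ennreal (W * V y)
        \<le> ennreal (K * ((1 + (\<xi> - y)^2) powr t * (cmod (b (\<xi> - y)))^2) * (1 + y^2) powr (-s0))"
      by (intro ennreal_leI) (simp add: mult_ac)
    then show "ennreal W * ennreal (V y)
        \<le> ennreal (K * ((1 + (\<xi> - y)^2) powr t * (cmod (b (\<xi> - y)))^2) * (1 + y^2) powr (-s0))"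
      by (simp only: ennreal_mult'[OF W_nonneg])
  qed simp
  finally show ?thesis
    unfolding W_def .
qed

lemma nn_integral_translated_Hs_weight:
  fixes b :: "real \<Rightarrow> complex"
  assumes [measurable]: "b \<in> borel_measurable borel" and K: "0 \<le> K"
  shows "(\<integral>\<^sup>+\<xi>. (\<integral>\<^sup>+y. ennreal (K * ((1 + (\<xi> - y)^2) powr t * (cmod (b (\<xi> - y)))^2) * (1 + y^2) powr (-s0)) \<partial>lborel) \<partial>lborel)
    = ennreal K * (\<integral>\<^sup>+y. ennreal ((1 + y^2) powr (-s0)) \<partial>lborel) * Hs_norm_sq t b"
proof -
  define F where "F \<xi> y = ennreal (K * ((1 + (\<xi> - y)^2) powr t * (cmod (b (\<xi> - y)))^2) * (1 + y^2) powr (-s0))"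
    for \<xi> y :: real
  have [measurable]: "case_prod F \<in> borel_measurable (lborel \<Otimes>\<^sub>M lborel)"
    unfolding F_def by measurable
  have translate: "(\<integral>\<^sup>+\<xi>. ennreal ((1 + (\<xi> - y)^2) powr t * (cmod (b (\<xi> - y)))^2) \<partial>lborel) = Hs_norm_sq t b"
    for y
    using nn_integral_real_affine[of "\<lambda>\<eta>. ennreal ((1 + \<eta>^2) powr t * (cmod (b \<eta>))^2)" 1 "-y"]
    by (simp add: Hs_norm_sq_def)
  have inner: "(\<integral>\<^sup>+\<xi>. F \<xi> y \<partial>lborel) = ennreal (K * (1 + y^2) powr (-s0)) * Hs_norm_sq t b" for y
  proof -
    have "(\<integral>\<^sup>+\<xi>. F \<xi> y \<partial>lborel)
        = (\<integral>\<^sup>+\<xi>. ennreal (K * (1 + y^2) powr (-s0)) * ennreal ((1 + (\<xi> - y)^2) powr t * (cmod (b (\<xi> - y)))^2) \<partial>lborel)"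
      unfolding F_def using K by (intro nn_integral_cong) (simp add: ennreal_mult[symmetric] mult_ac)
    also have "\<dots> = ennreal (K * (1 + y^2) powr (-s0)) * Hs_norm_sq t b"
      by (simp add: nn_integral_cmult translate)
    finally show ?thesis .
  qed
  have "(\<integral>\<^sup>+\<xi>. (\<integral>\<^sup>+y. F \<xi> y \<partial>lborel) \<partial>lborel) = (\<integral>\<^sup>+y. (\<integral>\<^sup>+\<xi>. F \<xi> y \<partial>lborel) \<partial>lborel)"
    by (rule lborel_pair.Fubini'[symmetric]) measurable
  also have "\<dots> = (\<integral>\<^sup>+y. ennreal (K * (1 + y^2) powr (-s0)) \<partial>lborel) * Hs_norm_sq t b"
    by (simp add: inner nn_integral_multc)
  also have "\<dots> = ennreal K * (\<integral>\<^sup>+y. ennreal ((1 + y^2) powr (-s0)) \<partial>lborel) * Hs_norm_sq t b"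
    using K by (simp add: ennreal_mult nn_integral_cmult)
  finally show ?thesis unfolding F_def .
qed

lemma integrable_of_weighted_nn_integral_bound:
  fixes f :: "'a \<Rightarrow> 'b::{banach, second_countable_topology}"
  assumes "f \<in> borel_measurable M" and "0 < W"
    and "ennreal W * (\<integral>\<^sup>+x. ennreal (norm (f x)) \<partial>M)^2 \<le> A" and "A < \<infinity>"
  shows "integrable M f"
proof (rule integrableI_bounded)
  have "ennreal W * (\<integral>\<^sup>+x. ennreal (norm (f x)) \<partial>M)^2 < \<infinity>"
    using assms(3,4) by (rule le_less_trans)
  then show "(\<integral>\<^sup>+x. ennreal (norm (f x)) \<partial>M) < \<infinity>"
    using assms(2) by (auto simp: ennreal_mult_less_top power_less_top_ennreal)
qed (fact assms(1))

lemma Hs_bilinear_bound: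
  fixes m :: "real \<Rightarrow> real \<Rightarrow> real" and a b :: "real \<Rightarrow> complex"
  assumes s0: "s0 > 1/2"
    and [measurable]: "\<And>\<xi>. m \<xi> \<in> borel_measurable borel"
      "a \<in> borel_measurable borel" "b \<in> borel_measurable borel"
    and Schur: "\<And>\<xi> y. (1 + \<xi>^2) powr s * (m \<xi> y)^2 \<le> K * (1 + (\<xi> - y)^2) powr t"
    and a_fin: "Hs_norm_sq s0 a < \<infinity>" and b_fin: "Hs_norm_sq t b < \<infinity>"
  shows "(AE \<xi> in lborel. integrable lborel (\<lambda>y. complex_of_real (m \<xi> y) * a y * b (\<xi> - y)))
    \<and> Hs_norm_sq s (\<lambda>\<xi>. - \<i> * (\<integral>y. complex_of_real (m \<xi> y) * a y * b (\<xi> - y) \<partial>lborel))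
       \<le> ennreal K * (\<integral>\<^sup>+y. ennreal ((1 + y^2) powr (-s0)) \<partial>lborel) * Hs_norm_sq s0 a * Hs_norm_sq t b"
proof -
  define f where "f \<xi> y = complex_of_real (m \<xi> y) * a y * b (\<xi> - y)" for \<xi> y
  define R where "R \<xi> = (\<integral>\<^sup>+y. ennreal (K * ((1 + (\<xi> - y)^2) powr t * (cmod (b (\<xi> - y)))^2)
      * (1 + y^2) powr (-s0)) \<partial>lborel)" for \<xi>
  have K_nonneg: "0 \<le> K"
  proof -
    have "(m 0 0)^2 \<le> K"
      using Schur[of 0 0] by simp
    then show ?thesis
      using zero_le_power2[of "m 0 0"] by linarith
  qed
  have [measurable]: "f \<xi> \<in> borel_measurable lborel" for \<xi>
    unfolding f_def by measurable
  have pointwise: "ennreal ((1 + \<xi>^2) powr s) * (\<integral>\<^sup>+y. ennreal (norm (f \<xi> y)) \<partial>lborel)^2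
      \<le> Hs_norm_sq s0 a * R \<xi>" for \<xi>
    unfolding f_def R_def by (rule Hs_bilinear_pointwise_bound) (simp_all add: Schur)
  have [measurable]: "R \<in> borel_measurable lborel"
    unfolding R_def by measurable
  have R_integral: "(\<integral>\<^sup>+\<xi>. R \<xi> \<partial>lborel)
      = ennreal K * (\<integral>\<^sup>+y. ennreal ((1 + y^2) powr (-s0)) \<partial>lborel) * Hs_norm_sq t b"
    unfolding R_def using K_nonneg by (rule nn_integral_translated_Hs_weight[rotated]) measurable
  have "AE \<xi> in lborel. R \<xi> \<noteq> \<infinity>"
    using nn_integral_Japanese_powr_finite[OF s0] b_fin
    by (intro nn_integral_PInf_AE) (simp_all add: R_integral ennreal_mult_eq_top_iff less_top)
  then have "AE \<xi> in lborel. integrable lborel (f \<xi>)"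
  proof (rule eventually_mono)
    fix \<xi> assume "R \<xi> \<noteq> \<infinity>"
    show "integrable lborel (f \<xi>)"
    proof (rule integrable_of_weighted_nn_integral_bound)
      show "0 < (1 + \<xi>^2) powr s"
        by (smt (verit) powr_gt_zero zero_le_power2)
      show "Hs_norm_sq s0 a * R \<xi> < \<infinity>"
        using a_fin \<open>R \<xi> \<noteq> \<infinity>\<close> by (simp add: ennreal_mult_less_top less_top)
    qed (simp_all add: pointwise)
  qed
  moreover have "Hs_norm_sq s (\<lambda>\<xi>. - \<i> * integral\<^sup>L lborel (f \<xi>)) \<le> (\<integral>\<^sup>+\<xi>. Hs_norm_sq s0 a * R \<xi> \<partial>lborel)"
    unfolding Hs_norm_sq_def[of s]
  proof (intro nn_integral_mono)
    fix \<xi>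
    have "ennreal (cmod (- \<i> * integral\<^sup>L lborel (f \<xi>))) \<le> (\<integral>\<^sup>+y. ennreal (norm (f \<xi> y)) \<partial>lborel)"
      using norm_integral_le_nn_integral_norm[of lborel "f \<xi>"] by (simp add: norm_mult)
    then have "ennreal ((1 + \<xi>^2) powr s) * ennreal (cmod (- \<i> * integral\<^sup>L lborel (f \<xi>))) ^ 2
        \<le> Hs_norm_sq s0 a * R \<xi>"
      using pointwise[of \<xi>] by (meson order_trans mult_left_mono power_mono zero_le)
    then show "ennreal ((1 + \<xi>^2) powr s * (cmod (- \<i> * integral\<^sup>L lborel (f \<xi>)))^2)
        \<le> Hs_norm_sq s0 a * R \<xi>"
      by (simp add: ennreal_mult ennreal_power)
  qed
  moreover have "(\<integral>\<^sup>+\<xi>. Hs_norm_sq s0 a * R \<xi> \<partial>lborel) = Hs_norm_sq s0 a * (\<integral>\<^sup>+\<xi>. R \<xi> \<partial>lborel)"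
    by (rule nn_integral_cmult) measurable
  ultimately show ?thesis
    unfolding f_def by (simp add: R_integral mult_ac)
qed

section \<open>The high-low kernel\<close>

text \<open>A dyadic piece of M_lambda at scale N >= 16 is supported where N/2 < |xi| <= 5N/4 and
  |xi1| <= 5N/32, which lies inside the region below.\<close>

definition high_low_kernel :: "real \<Rightarrow> real \<Rightarrow> real \<Rightarrow> real" where
  "high_low_kernel D \<xi> y = (if 8 < \<bar>\<xi>\<bar> \<and> \<bar>y\<bar> < 5 * \<bar>\<xi>\<bar> / 16 then D / \<bar>\<xi>\<bar>^3 else 0)"

lemma powr_le_powr_abs_of_ratio_bounds:
  fixes r c t :: real
  assumes "1 \<le> c" "1 / c \<le> r" "r \<le> c"
  shows "r powr t \<le> c powr \<bar>t\<bar>"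
proof -
  have r_pos: "0 < r"
    using assms by (smt (verit) divide_pos_pos)
  show ?thesis
  proof (cases "t \<ge> 0")
    case True
    then show ?thesis
      using assms r_pos by (simp add: powr_mono2)
  next
    case False
    have "r powr t = (1 / r) powr (-t)"
      using r_pos by (simp add: powr_minus_divide powr_divide)
    also have "\<dots> \<le> c powr (-t)"
      using False assms r_pos by (intro powr_mono2) (auto simp: field_simps)
    finally show ?thesis
      using False by simp
  qed
qed

lemma Japanese_bracket_ratio_bounds:
  fixes \<xi> y :: real
  assumes "\<bar>y\<bar> < 5 * \<bar>\<xi>\<bar> / 16"
  shows "1 / 3 \<le> (1 + \<xi>^2) / (1 + (\<xi> - y)^2)" and "(1 + \<xi>^2) / (1 + (\<xi> - y)^2) \<le> 3"
proof -
  have lower: "11 * \<bar>\<xi>\<bar> / 16 \<le> \<bar>\<xi> - y\<bar>" and upper: "\<bar>\<xi> - y\<bar> \<le> 21 * \<bar>\<xi>\<bar> / 16"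
    using assms abs_triangle_ineq2[of \<xi> y] abs_triangle_ineq4[of \<xi> y] by linarith+
  have "(11 * \<bar>\<xi>\<bar> / 16)^2 \<le> (\<xi> - y)^2"
    using power_mono[OF lower, of 2] by simp
  moreover have "(\<xi> - y)^2 \<le> (21 * \<bar>\<xi>\<bar> / 16)^2"
    using power_mono[OF upper, of 2] by simp
  moreover have "0 < 1 + (\<xi> - y)^2"
    by (simp add: add_pos_nonneg)
  ultimately show "1 / 3 \<le> (1 + \<xi>^2) / (1 + (\<xi> - y)^2)" and "(1 + \<xi>^2) / (1 + (\<xi> - y)^2) \<le> 3"
    by (simp_all add: field_simps power_mult_distrib)
qed

lemma high_low_kernel_Schur_bound:
  fixes \<xi> y s D :: real
  shows "(1 + \<xi>^2) powr s * (high_low_kernel D \<xi> y)^2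
    \<le> D^2 * (65/64)^3 * 3 powr \<bar>s - 3\<bar> * (1 + (\<xi> - y)^2) powr (s - 3)"
proof (cases "8 < \<bar>\<xi>\<bar> \<and> \<bar>y\<bar> < 5 * \<bar>\<xi>\<bar> / 16")
  case False
  then show ?thesis
    by (auto simp: high_low_kernel_def)
next
  case True
  define X where "X = 1 + \<xi>^2"
  define Y where "Y = 1 + (\<xi> - y)^2"
  have X_pos: "0 < X" and Y_pos: "0 < Y"
    unfolding X_def Y_def by (simp_all add: add_pos_nonneg)
  have xi_sq: "64 \<le> \<xi>^2"
    using power_mono[of 8 "\<bar>\<xi>\<bar>" 2] True by simp
  then have "(64/65) * X \<le> \<xi>^2"
    unfolding X_def by simp
  then have "((64/65) * X)^3 \<le> (\<xi>^2)^3"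
    using X_pos by (intro power_mono) auto
  then have "D^2 / (\<xi>^2)^3 \<le> D^2 / ((64/65) * X)^3"
    using X_pos True by (intro divide_left_mono mult_pos_pos) auto
  then have kernel_sq: "(high_low_kernel D \<xi> y)^2 \<le> D^2 * (65/64)^3 / X^3"
    using True by (simp add: high_low_kernel_def power_divide power_mult_distrib field_simps
        flip: power_mult)
  have "X powr s * (high_low_kernel D \<xi> y)^2 \<le> X powr s * (D^2 * (65/64)^3 / X^3)"
    using kernel_sq by (intro mult_left_mono) simp_all
  also have "\<dots> = D^2 * (65/64)^3 * ((X / Y) powr (s - 3) * Y powr (s - 3))"
    using X_pos Y_pos by (simp add: powr_diff powr_realpow powr_divide)
  also have "\<dots> \<le> D^2 * (65/64)^3 * (3 powr \<bar>s - 3\<bar> * Y powr (s - 3))"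
    using Japanese_bracket_ratio_bounds[of y \<xi>] True
    by (intro mult_left_mono mult_right_mono powr_le_powr_abs_of_ratio_bounds) (simp_all add: X_def Y_def)
  finally show ?thesis
    unfolding X_def Y_def by (simp add: mult_ac)
qed

section \<open>Bounds for the multiplier\<close>

definition dyadic_piece :: "(real \<Rightarrow> real) \<Rightarrow> real \<Rightarrow> real \<Rightarrow> real \<Rightarrow> real \<Rightarrow> real" where
  "dyadic_piece \<phi> N lam \<xi> y =
     phiN \<phi> (N / 8) y * psiN \<phi> N \<xi> / (lam * \<xi>^2 - lam * y^2 - (\<xi> - y)^3)"

lemma M_lambda_eq_suminf_dyadic_piece:
  "M_lambda \<phi> C0 lam \<xi> y = 1 / sqrt (2 * pi) * (\<Sum>k. dyadic_piece \<phi> (C0 * 2^k) lam \<xi> y)"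
  by (simp add: M_lambda_def dyadic_piece_def Let_def)

lemma psiN_eq_0:
  assumes one: "\<forall>x. \<bar>x\<bar> \<le> 1 \<longrightarrow> \<phi> x = 1" and zero: "\<forall>x. \<bar>x\<bar> > 5/4 \<longrightarrow> \<phi> x = 0"
    and N: "0 < N" and \<xi>: "\<bar>\<xi>\<bar> \<le> N / 2 \<or> 5 * N / 4 < \<bar>\<xi>\<bar>"
  shows "psiN \<phi> N \<xi> = 0"
  using \<xi>
proof
  assume "\<bar>\<xi>\<bar> \<le> N / 2"
  then have "\<bar>\<xi> / N\<bar> \<le> 1" and "\<bar>\<xi> / (N / 2)\<bar> \<le> 1"
    using N by (simp_all add: abs_divide field_simps)
  then show ?thesis
    using one by (simp add: psiN_def phiN_def)
next
  assume "5 * N / 4 < \<bar>\<xi>\<bar>"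
  then have "5/4 < \<bar>\<xi> / N\<bar>" and "5/4 < \<bar>\<xi> / (N / 2)\<bar>"
    using N by (simp_all add: abs_divide field_simps)
  then show ?thesis
    using zero by (simp add: psiN_def phiN_def)
qed

lemma phiN_eq_0:
  assumes zero: "\<forall>x. \<bar>x\<bar> > 5/4 \<longrightarrow> \<phi> x = 0" and N: "0 < N" and y: "5 * N / 32 < \<bar>y\<bar>"
  shows "phiN \<phi> (N / 8) y = 0"
proof -
  have "5/4 < \<bar>y / (N / 8)\<bar>"
    using y N by (simp add: abs_divide field_simps)
  then show ?thesis
    using zero by (simp add: phiN_def)
qed

lemma resonance_function_lower_bound:
  fixes \<xi> y lam :: real
  assumes \<xi>: "8 < \<bar>\<xi>\<bar>" and y: "\<bar>y\<bar> < 5 * \<bar>\<xi>\<bar> / 16" and lam: "0 < lam" "lam \<le> 1"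
  shows "\<bar>\<xi>\<bar>^3 / 6 \<le> \<bar>lam * \<xi>^2 - lam * y^2 - (\<xi> - y)^3\<bar>"
proof -
  define x where "x = \<bar>\<xi>\<bar>"
  have "11 * x / 16 \<le> \<bar>\<xi> - y\<bar>"
    unfolding x_def using y abs_triangle_ineq2[of \<xi> y] by linarith
  then have cubic: "(1331/4096) * x^3 \<le> \<bar>(\<xi> - y)^3\<bar>"
    using power_mono[of "11 * x / 16" "\<bar>\<xi> - y\<bar>" 3] \<xi>
    by (simp add: x_def power_abs power_mult_distrib power_divide)
  have "y^2 \<le> \<xi>^2"
    using power_mono[of "\<bar>y\<bar>" "\<bar>\<xi>\<bar>" 2] y by simp
  then have "0 \<le> lam * (\<xi>^2 - y^2)" and "lam * (\<xi>^2 - y^2) \<le> \<xi>^2 - y^2"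
    using lam mult_right_mono[of lam 1 "\<xi>^2 - y^2"] by simp_all
  then have "\<bar>lam * \<xi>^2 - lam * y^2\<bar> \<le> \<xi>^2 - y^2"
    by (simp add: right_diff_distrib)
  also have "\<dots> \<le> \<xi>^2"
    by simp
  also have "\<xi>^2 \<le> x^3 / 8"
    using mult_left_mono[of 8 x "x^2"] \<xi> by (simp add: x_def power2_eq_square power3_eq_cube)
  finally have quadratic: "\<bar>lam * \<xi>^2 - lam * y^2\<bar> \<le> x^3 / 8" .
  have "\<bar>(\<xi> - y)^3\<bar> - \<bar>lam * \<xi>^2 - lam * y^2\<bar> \<le> \<bar>lam * \<xi>^2 - lam * y^2 - (\<xi> - y)^3\<bar>"
    by (metis abs_minus_commute abs_triangle_ineq2)
  moreover have "0 < x^3"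
    using \<xi> by (simp add: x_def)
  ultimately show ?thesis
    using cubic quadratic unfolding x_def by linarith
qed

lemma dyadic_piece_bound:
  assumes one: "\<forall>x. \<bar>x\<bar> \<le> 1 \<longrightarrow> \<phi> x = 1" and zero: "\<forall>x. \<bar>x\<bar> > 5/4 \<longrightarrow> \<phi> x = 0"
    and bound: "\<forall>x. \<bar>\<phi> x\<bar> \<le> \<Phi>" and N: "16 \<le> N" and lam: "0 < lam" "lam \<le> 1"
  shows "\<bar>dyadic_piece \<phi> N lam \<xi> y\<bar>
    \<le> high_low_kernel (15 * \<Phi>^2) \<xi> y * (if N < 2 * \<bar>\<xi>\<bar> then N / \<bar>\<xi>\<bar> else 0)"
proof (cases "phiN \<phi> (N / 8) y = 0 \<or> psiN \<phi> N \<xi> = 0")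
  case True
  then show ?thesis
    using N by (auto simp: dyadic_piece_def high_low_kernel_def)
next
  case False
  have N_pos: "0 < N"
    using N by simp
  have \<xi>_lower: "N / 2 < \<bar>\<xi>\<bar>" and \<xi>_upper: "\<bar>\<xi>\<bar> \<le> 5 * N / 4"
    using psiN_eq_0[OF one zero N_pos, of \<xi>] False by linarith+
  have y_upper: "\<bar>y\<bar> \<le> 5 * N / 32"
    using phiN_eq_0[OF zero N_pos, of y] False by force
  have region: "8 < \<bar>\<xi>\<bar>" "\<bar>y\<bar> < 5 * \<bar>\<xi>\<bar> / 16"
    using \<xi>_lower y_upper N by simp_all
  have "\<bar>phiN \<phi> (N / 8) y\<bar> \<le> \<Phi>" and "\<bar>psiN \<phi> N \<xi>\<bar> \<le> 2 * \<Phi>"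
    using bound[rule_format, of "y / (N / 8)"] bound[rule_format, of "\<xi> / N"]
      bound[rule_format, of "\<xi> / (N / 2)"]
    by (simp_all add: phiN_def psiN_def)
  then have numerator: "\<bar>phiN \<phi> (N / 8) y * psiN \<phi> N \<xi>\<bar> \<le> 2 * \<Phi>^2"
    using mult_mono[of "\<bar>phiN \<phi> (N / 8) y\<bar>" \<Phi> "\<bar>psiN \<phi> N \<xi>\<bar>" "2 * \<Phi>"]
    by (simp add: abs_mult power2_eq_square)
  have "\<bar>dyadic_piece \<phi> N lam \<xi> y\<bar> \<le> 2 * \<Phi>^2 / (\<bar>\<xi>\<bar>^3 / 6)"
    unfolding dyadic_piece_def abs_divide
    using numerator resonance_function_lower_bound[OF region lam] region
    by (intro frac_le) simp_all
  also have "\<dots> = \<Phi>^2 / \<bar>\<xi>\<bar>^3 * 12"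
    by simp
  \<comment> \<open>Since 4/5 \<le> N/|xi|, this loss makes the bounds summable over the dyadic N < 2|xi|.\<close>
  also have "\<dots> \<le> \<Phi>^2 / \<bar>\<xi>\<bar>^3 * (15 * (N / \<bar>\<xi>\<bar>))"
    using \<xi>_upper region by (intro mult_left_mono) (simp_all add: field_simps)
  finally show ?thesis
    using region \<xi>_lower by (simp add: high_low_kernel_def mult_ac)
qed

lemma sum_dyadic_below_le:
  fixes c t :: real
  assumes "0 < c" "0 \<le> t"
  shows "(\<Sum>k<n. if c * 2^k < t then c * 2^k else 0) \<le> 2 * t"
proof (induction n)
  case 0
  then show ?case
    using assms by simp
next
  case (Suc n)
  show ?case
  proof (cases "c * 2^n < t")
    case True
    have "(\<Sum>k<n. if c * 2^k < t then c * 2^k else 0) \<le> (\<Sum>k<n. c * 2^k)"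
      using assms by (intro sum_mono) auto
    also have "\<dots> = c * 2^n - c"
      by (induction n) (simp_all add: algebra_simps)
    finally have "(\<Sum>k<n. if c * 2^k < t then c * 2^k else 0) \<le> c * 2^n - c" .
    moreover have "(\<Sum>k<Suc n. if c * 2^k < t then c * 2^k else 0)
        = (\<Sum>k<n. if c * 2^k < t then c * 2^k else 0) + c * 2^n"
      using True by simp
    ultimately show ?thesis
      using True assms by linarith
  next
    case False
    then show ?thesis
      using Suc.IH by simp
  qed
qed

lemma M_lambda_eq_finite_sum:
  assumes one: "\<forall>x. \<bar>x\<bar> \<le> 1 \<longrightarrow> \<phi> x = 1" and zero: "\<forall>x. \<bar>x\<bar> > 5/4 \<longrightarrow> \<phi> x = 0"
    and N0: "0 < N0"
  obtains n where "M_lambda \<phi> N0 lam \<xi> = (\<lambda>y. 1 / sqrt (2 * pi) * (\<Sum>k<n. dyadic_piece \<phi> (N0 * 2^k) lam \<xi> y))"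
proof -
  obtain n where "2 * \<bar>\<xi>\<bar> / N0 < 2 ^ n"
    using real_arch_pow[of 2 "2 * \<bar>\<xi>\<bar> / N0"] by auto
  then have n: "2 * \<bar>\<xi>\<bar> < N0 * 2 ^ n"
    using N0 by (simp add: field_simps)
  have "dyadic_piece \<phi> (N0 * 2^k) lam \<xi> y = 0" if "n \<le> k" for k y
  proof -
    have "N0 * 2 ^ n \<le> N0 * 2 ^ k"
      using that N0 by (intro mult_left_mono power_increasing) auto
    then have "\<bar>\<xi>\<bar> \<le> N0 * 2^k / 2"
      using n by linarith
    then show ?thesis
      using N0 psiN_eq_0[OF one zero] by (simp add: dyadic_piece_def)
  qed
  then have "(\<Sum>k. dyadic_piece \<phi> (N0 * 2^k) lam \<xi> y) = (\<Sum>k<n. dyadic_piece \<phi> (N0 * 2^k) lam \<xi> y)" for y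
    by (intro suminf_finite) auto
  then show ?thesis
    by (intro that ext) (simp add: M_lambda_eq_suminf_dyadic_piece)
qed

lemma M_lambda_measurable:
  assumes one: "\<forall>x. \<bar>x\<bar> \<le> 1 \<longrightarrow> \<phi> x = 1" and zero: "\<forall>x. \<bar>x\<bar> > 5/4 \<longrightarrow> \<phi> x = 0"
    and [measurable]: "\<phi> \<in> borel_measurable borel" and N0: "0 < N0"
  shows "M_lambda \<phi> N0 lam \<xi> \<in> borel_measurable borel"
proof -
  obtain n where "M_lambda \<phi> N0 lam \<xi> = (\<lambda>y. 1 / sqrt (2 * pi) * (\<Sum>k<n. dyadic_piece \<phi> (N0 * 2^k) lam \<xi> y))"
    using M_lambda_eq_finite_sum[OF one zero N0] .
  then show ?thesis
    by (simp add: dyadic_piece_def phiN_def psiN_def)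
qed

lemma M_lambda_le_high_low_kernel:
  assumes one: "\<forall>x. \<bar>x\<bar> \<le> 1 \<longrightarrow> \<phi> x = 1" and zero: "\<forall>x. \<bar>x\<bar> > 5/4 \<longrightarrow> \<phi> x = 0"
    and bound: "\<forall>x. \<bar>\<phi> x\<bar> \<le> \<Phi>" and N0: "16 \<le> N0" and lam: "0 < lam" "lam \<le> 1"
  shows "\<bar>M_lambda \<phi> N0 lam \<xi> y\<bar> \<le> high_low_kernel (60 * \<Phi>^2) \<xi> y"
proof -
  have N0_pos: "0 < N0"
    using N0 by simp
  obtain n where M_eq: "M_lambda \<phi> N0 lam \<xi> = (\<lambda>y. 1 / sqrt (2 * pi) * (\<Sum>k<n. dyadic_piece \<phi> (N0 * 2^k) lam \<xi> y))"
    using M_lambda_eq_finite_sum[OF one zero N0_pos] .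
  have dyadic_weights: "(\<Sum>k<n. if N0 * 2^k < 2 * \<bar>\<xi>\<bar> then N0 * 2^k / \<bar>\<xi>\<bar> else 0) \<le> 4"
  proof -
    have "(\<Sum>k<n. if N0 * 2^k < 2 * \<bar>\<xi>\<bar> then N0 * 2^k / \<bar>\<xi>\<bar> else 0)
        = (\<Sum>k<n. if N0 * 2^k < 2 * \<bar>\<xi>\<bar> then N0 * 2^k else 0) / \<bar>\<xi>\<bar>"
      by (subst sum_divide_distrib) (intro sum.cong; simp)
    also have "\<dots> \<le> 2 * (2 * \<bar>\<xi>\<bar>) / \<bar>\<xi>\<bar>"
      using sum_dyadic_below_le[OF N0_pos, of "2 * \<bar>\<xi>\<bar>" n] by (intro divide_right_mono) simp_all
    also have "\<dots> \<le> 4"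
      by (cases "\<xi> = 0") simp_all
    finally show ?thesis .
  qed
  have "1 \<le> sqrt (2 * pi)"
    using pi_gt3 by simp
  then have "\<bar>M_lambda \<phi> N0 lam \<xi> y\<bar> \<le> \<bar>\<Sum>k<n. dyadic_piece \<phi> (N0 * 2^k) lam \<xi> y\<bar>"
    unfolding M_eq
    using mult_left_mono[of 1 "sqrt (2 * pi)" "\<bar>\<Sum>k<n. dyadic_piece \<phi> (N0 * 2^k) lam \<xi> y\<bar>"]
    by (simp add: abs_mult divide_le_eq)
  also have "\<dots> \<le> (\<Sum>k<n. \<bar>dyadic_piece \<phi> (N0 * 2^k) lam \<xi> y\<bar>)"
    by (rule sum_abs)
  also have "\<dots> \<le> (\<Sum>k<n. high_low_kernel (15 * \<Phi>^2) \<xi> y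
      * (if N0 * 2^k < 2 * \<bar>\<xi>\<bar> then N0 * 2^k / \<bar>\<xi>\<bar> else 0))"
  proof (intro sum_mono dyadic_piece_bound[OF one zero bound _ lam])
    fix k :: nat
    have "N0 * 1 \<le> N0 * 2^k"
      using N0 by (intro mult_left_mono) simp_all
    then show "16 \<le> N0 * 2^k"
      using N0 by linarith
  qed
  also have "\<dots> \<le> high_low_kernel (15 * \<Phi>^2) \<xi> y * 4"
    using dyadic_weights by (simp add: sum_distrib_left[symmetric] high_low_kernel_def mult_left_mono)
  also have "\<dots> = high_low_kernel (60 * \<Phi>^2) \<xi> y"
    by (simp add: high_low_kernel_def)
  finally show ?thesis .
qed

lemma M_lambda_Schur_bound:
  assumes one: "\<forall>x. \<bar>x\<bar> \<le> 1 \<longrightarrow> \<phi> x = 1" and zero: "\<forall>x. \<bar>x\<bar> > 5/4 \<longrightarrow> \<phi> x = 0"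
    and bound: "\<forall>x. \<bar>\<phi> x\<bar> \<le> \<Phi>" and N0: "16 \<le> N0" and lam: "0 < lam" "lam \<le> 1"
  shows "(1 + \<xi>^2) powr s * (M_lambda \<phi> N0 lam \<xi> y)^2
    \<le> (60 * \<Phi>^2)^2 * (65/64)^3 * 3 powr \<bar>s - 3\<bar> * (1 + (\<xi> - y)^2) powr (s - 3)"
proof -
  have "\<bar>M_lambda \<phi> N0 lam \<xi> y\<bar>^2 \<le> (high_low_kernel (60 * \<Phi>^2) \<xi> y)^2"
    using M_lambda_le_high_low_kernel[OF one zero bound N0 lam] by (intro power_mono) simp_all
  then have "(1 + \<xi>^2) powr s * (M_lambda \<phi> N0 lam \<xi> y)^2
      \<le> (1 + \<xi>^2) powr s * (high_low_kernel (60 * \<Phi>^2) \<xi> y)^2"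
    by (intro mult_left_mono) simp_all
  also have "\<dots> \<le> (60 * \<Phi>^2)^2 * (65/64)^3 * 3 powr \<bar>s - 3\<bar> * (1 + (\<xi> - y)^2) powr (s - 3)"
    by (rule high_low_kernel_Schur_bound)
  finally show ?thesis .
qed

lemma B_hat_Hs_bound:
  fixes a b :: "real \<Rightarrow> complex"
  assumes one: "\<forall>x. \<bar>x\<bar> \<le> 1 \<longrightarrow> \<phi> x = 1" and zero: "\<forall>x. \<bar>x\<bar> > 5/4 \<longrightarrow> \<phi> x = 0"
    and bound: "\<forall>x. \<bar>\<phi> x\<bar> \<le> \<Phi>" and [measurable]: "\<phi> \<in> borel_measurable borel"
    and s0: "s0 > 1/2" and N0: "16 \<le> N0" and lam: "0 < lam" "lam \<le> 1"
    and measurable: "a \<in> borel_measurable borel" "b \<in> borel_measurable borel"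
    and finite: "Hs_norm_sq s0 a < \<infinity>" "Hs_norm_sq (s - 3) b < \<infinity>"
  shows "(AE \<xi> in lborel. integrable lborel
            (\<lambda>y. complex_of_real (M_lambda \<phi> N0 lam \<xi> y) * a y * b (\<xi> - y)))
    \<and> Hs_norm_sq s (B_hat \<phi> N0 lam a b)
      \<le> ennreal ((60 * \<Phi>^2)^2 * (65/64)^3 * 3 powr \<bar>s - 3\<bar>)
        * (\<integral>\<^sup>+y. ennreal ((1 + y^2) powr (-s0)) \<partial>lborel) * Hs_norm_sq s0 a * Hs_norm_sq (s - 3) b"
proof -
  have "M_lambda \<phi> N0 lam \<xi> \<in> borel_measurable borel" for \<xi>
    using N0 by (intro M_lambda_measurable[OF one zero]) simp_all
  then show ?thesis
    unfolding B_hat_def[abs_def]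
    by (rule Hs_bilinear_bound[OF s0 _ measurable M_lambda_Schur_bound[OF one zero bound N0 lam] finite])
qed

lemma smooth_fun_continuous:
  assumes "smooth_fun f"
  shows "continuous_on UNIV f"
proof -
  have "((deriv ^^ 0) f) differentiable (at x)" for x
    using assms unfolding smooth_fun_def by blast
  then show ?thesis
    by (simp add: continuous_at_imp_continuous_on differentiable_imp_continuous_within)
qed

lemma continuous_vanishing_outside_bounded:
  fixes f :: "real \<Rightarrow> real"
  assumes "continuous_on UNIV f" and "\<And>x. R < \<bar>x\<bar> \<Longrightarrow> f x = 0"
  obtains B where "\<And>x. \<bar>f x\<bar> \<le> B"
proof -
  have "compact (f ` {-R..R})"
    using assms(1) by (intro compact_continuous_image) (auto intro: continuous_on_subset)
  then obtain B where B: "\<forall>y\<in>f ` {-R..R}. norm y \<le> B"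
    using compact_imp_bounded bounded_iff by blast
  have "\<bar>f x\<bar> \<le> max B 0" for x
  proof (cases "R < \<bar>x\<bar>")
    case True
    then show ?thesis
      using assms(2) by simp
  next
    case False
    then have "x \<in> {-R..R}"
      by auto
    then have "norm (f x) \<le> B"
      using B by blast
    then show ?thesis
      by simp
  qed
  then show ?thesis
    by (rule that)
qed

lemma ennreal_mult_le_square:
  assumes "0 \<le> K" and "I < \<infinity>"
  obtains C :: real where "0 < C" and "ennreal K * I \<le> ennreal (C^2)"
proof -
  define C where "C = sqrt (K * enn2real I) + 1"
  have KI: "0 \<le> K * enn2real I"
    using assms by simp
  have "ennreal K * I = ennreal (K * enn2real I)"
    using assms by (simp add: ennreal_mult ennreal_enn2real_if less_top)
  also have "K * enn2real I = (sqrt (K * enn2real I))^2"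
    using KI by simp
  also have "\<dots> \<le> C^2"
    unfolding C_def using KI by (intro power_mono) simp_all
  finally have "ennreal K * I \<le> ennreal (C^2)"
    by (simp add: ennreal_leI)
  moreover have "0 < C"
    unfolding C_def using KI by (intro add_nonneg_pos) simp_all
  ultimately show ?thesis
    using that by blast
qed

theorem lemma5p13:
  fixes \<phi> :: "real \<Rightarrow> real" and s s0 :: real
  assumes "smooth_fun \<phi>"
    and "\<forall>x. \<phi> (- x) = \<phi> x"
    and "\<forall>x. \<bar>x\<bar> \<le> 1 \<longrightarrow> \<phi> x = 1"
    and "\<forall>x. \<bar>x\<bar> > 5/4 \<longrightarrow> \<phi> x = 0"
    and "s0 > 1/2"
  shows "\<exists>K. \<forall>j::nat. (2::real) ^ j \<ge> K \<longrightarrow>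
           (\<exists>C>0. \<forall>lam a b. 0 < lam \<and> lam \<le> 1
              \<and> a \<in> borel_measurable lborel \<and> b \<in> borel_measurable lborel
              \<and> Hs_norm_sq s0 a < \<infinity> \<and> Hs_norm_sq (s - 3) b < \<infinity> \<longrightarrow>
                (AE \<xi> in lborel. integrable lborel
                   (\<lambda>\<xi>1. complex_of_real (M_lambda \<phi> (2 ^ j) lam \<xi> \<xi>1) * a \<xi>1 * b (\<xi> - \<xi>1)))
                \<and> Hs_norm_sq s (B_hat \<phi> (2 ^ j) lam a b)
                    \<le> ennreal (C^2) * Hs_norm_sq s0 a * Hs_norm_sq (s - 3) b)"
proof -
  note one = assms(3) and zero = assms(4) and s0 = assms(5)
  have continuous: "continuous_on UNIV \<phi>"
    using assms(1) by (rule smooth_fun_continuous)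
  then obtain \<Phi> where bound: "\<forall>x. \<bar>\<phi> x\<bar> \<le> \<Phi>"
    using continuous_vanishing_outside_bounded[of \<phi> "5/4"] zero by auto
  have [measurable]: "\<phi> \<in> borel_measurable borel"
    using continuous by (rule borel_measurable_continuous_onI)
  define K where "K = (60 * \<Phi>^2)^2 * (65/64)^3 * 3 powr \<bar>s - 3\<bar>"
  define I where "I = (\<integral>\<^sup>+y. ennreal ((1 + y^2) powr (-s0)) \<partial>lborel)"
  obtain C where C_pos: "0 < C" and C: "ennreal K * I \<le> ennreal (C^2)"
    using ennreal_mult_le_square[of K I] nn_integral_Japanese_powr_finite[OF s0]
    by (auto simp: K_def I_def)
  show ?thesis
  proof (rule exI[of _ 16], intro allI impI exI[of _ C] conjI[OF C_pos])
    fix j :: nat and lam :: real and a b :: "real \<Rightarrow> complex"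
    assume "16 \<le> (2::real) ^ j" and "0 < lam \<and> lam \<le> 1
      \<and> a \<in> borel_measurable lborel \<and> b \<in> borel_measurable lborel
      \<and> Hs_norm_sq s0 a < \<infinity> \<and> Hs_norm_sq (s - 3) b < \<infinity>"
    then have "(AE \<xi> in lborel. integrable lborel
            (\<lambda>y. complex_of_real (M_lambda \<phi> (2 ^ j) lam \<xi> y) * a y * b (\<xi> - y)))
      \<and> Hs_norm_sq s (B_hat \<phi> (2 ^ j) lam a b) \<le> ennreal K * I * Hs_norm_sq s0 a * Hs_norm_sq (s - 3) b"
      unfolding K_def I_def by (intro B_hat_Hs_bound[OF one zero bound _ s0]) auto
    moreover have "ennreal K * I * Hs_norm_sq s0 a * Hs_norm_sq (s - 3) b
        \<le> ennreal (C^2) * Hs_norm_sq s0 a * Hs_norm_sq (s - 3) b"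
      using C by (intro mult_right_mono) simp_all
    ultimately show "(AE \<xi> in lborel. integrable lborel
            (\<lambda>y. complex_of_real (M_lambda \<phi> (2 ^ j) lam \<xi> y) * a y * b (\<xi> - y)))
      \<and> Hs_norm_sq s (B_hat \<phi> (2 ^ j) lam a b) \<le> ennreal (C^2) * Hs_norm_sq s0 a * Hs_norm_sq (s - 3) b"
      by (blast intro: order_trans)
  qed
qed

end
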